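(* Fix $n\in\mathbb{N}$, points $x_1,\dots,x_n$, $\varepsilon_n>0$, a continuous function $V:\mathbb{R}\to[0,\infty)$ and weights $W_{ij}\geq0$ ($i,j=1,\dots,n$). For $p\geq1$ and $u:\{x_1,\dots,x_n\}\to\mathbb{R}$ define \[ \tilde{\mathcal{G}}_n^{(p)}(u)=\Big[\frac{1}{\varepsilon_nn^2}\sum_{i,j=1}^nW_{ij}^p|u(x_i)-u(x_j)|^p+\frac{1}{\varepsilon_n^pn}\sum_{i=1}^nV^p(u(x_i))\Big]^{1/p}, \] \[ \mathcal{G}_n^{(\infty)}(u)=\max\Big\{\max_{i,j}W_{ij}|u(x_i)-u(x_j)|,\ \frac{1}{\varepsilon_n}\max_iV(u(x_i))\Big\}. \] Then $\tilde{\mathcal{G}}_n^{(p)}$ $\Gamma$-converges to $\mathcal{G}_n^{(\infty)}$ as $p\to\infty$, with respect to pointwise convergence of functions on $\{x_1,\dots,x_n\}$ (i.e. convergence in $\mathbb{R}^n$).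
   Context: $\Gamma$-convergence as $p\to\infty$: for every $u$ and every family $u_p\to u$, $\mathcal{G}_n^{(\infty)}(u)\leq\liminf_{p\to\infty}\tilde{\mathcal{G}}_n^{(p)}(u_p)$, and for every $u$ there exists $u_p\to u$ with $\limsup_{p\to\infty}\tilde{\mathcal{G}}_n^{(p)}(u_p)\leq\mathcal{G}_n^{(\infty)}(u)$. *)

theory Defs
  imports "HOL-Analysis.Analysis"
begin

text \<open>The points x_1..x_n are represented by the finite index type 'n (n = CARD('n));
  a function u on the points is a vector u :: 'n \<Rightarrow> real.\<close>

definition Gp :: "real \<Rightarrow> ('n::finite \<Rightarrow> 'n \<Rightarrow> real) \<Rightarrow> (real \<Rightarrow> real) \<Rightarrow> real \<Rightarrow> ('n \<Rightarrow> real) \<Rightarrow> real" where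
  "Gp eps W V p u =
     ((1 / (eps * real CARD('n) ^ 2)) * (\<Sum>i\<in>UNIV. \<Sum>j\<in>UNIV. W i j powr p * \<bar>u i - u j\<bar> powr p)
      + (1 / (eps powr p * real CARD('n))) * (\<Sum>i\<in>UNIV. V (u i) powr p)) powr (1 / p)"

definition Ginf :: "real \<Rightarrow> ('n::finite \<Rightarrow> 'n \<Rightarrow> real) \<Rightarrow> (real \<Rightarrow> real) \<Rightarrow> ('n \<Rightarrow> real) \<Rightarrow> real" where
  "Ginf eps W V u =
     max (Max {W i j * \<bar>u i - u j\<bar> | i j. True}) ((1 / eps) * Max {V (u i) | i. True})"

end

theory Submission
  imports Defs
begin

text \<open>After moving the factor \<open>1/eps\<^sup>p\<close> inside the potential terms, \<open>Gp\<close> is a weighted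
  \<open>p\<close>-mean \<open>(\<Sum>\<^sub>k c\<^sub>k a\<^sub>k\<^sup>p)\<^sup>1\<^sup>/\<^sup>p\<close> of finitely many nonnegative quantities \<open>a\<^sub>k\<close>
  with weights \<open>c\<^sub>k > 0\<close> not depending on \<open>p\<close>, and \<open>Ginf\<close> is the maximum of the same quantities.
  Such a mean lies between \<open>(min c)\<^sup>1\<^sup>/\<^sup>p max a\<close> and \<open>(\<Sum> c)\<^sup>1\<^sup>/\<^sup>p max a\<close>, so it tends to
  \<open>max a\<close>; this stays true when the \<open>a\<^sub>k\<close> themselves converge, and they depend continuously
  on \<open>u\<close>. Hence \<open>Gp (u\<^sub>p) \<rightarrow> Ginf u\<close> whenever \<open>u\<^sub>p \<rightarrow> u\<close>, which gives the liminf inequality,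
  and the constant family \<open>u\<^sub>p = u\<close> is a recovery sequence.\<close>

lemma tendsto_Max_finite:
  fixes f :: "'a \<Rightarrow> 'b \<Rightarrow> 'c::linorder_topology"
  assumes "finite A" "A \<noteq> {}" "\<And>k. k \<in> A \<Longrightarrow> (f k \<longlongrightarrow> l k) F"
  shows "((\<lambda>x. Max ((\<lambda>k. f k x) ` A)) \<longlongrightarrow> Max (l ` A)) F"
  using assms
proof (induction A rule: finite_ne_induct)
  case (singleton k)
  then show ?case by simp
next
  case (insert k A)
  then have "((\<lambda>x. max (f k x) (Max ((\<lambda>k. f k x) ` A))) \<longlongrightarrow> max (l k) (Max (l ` A))) F"
    by (intro tendsto_max) auto
  with insert show ?case by simp
qed

lemma weighted_powr_sum_le:
  fixes x c :: "'a \<Rightarrow> real"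
  assumes "finite A" "p > 0" "\<And>k. k \<in> A \<Longrightarrow> c k \<ge> 0" "\<And>k. k \<in> A \<Longrightarrow> x k \<ge> 0"
  shows "(\<Sum>k\<in>A. c k * x k powr p) \<le> (\<Sum>k\<in>A. c k) * Max (x ` A) powr p"
proof -
  have "c k * x k powr p \<le> c k * Max (x ` A) powr p" if k: "k \<in> A" for k
  proof -
    have "x k \<le> Max (x ` A)"
      using assms(1) k by simp
    then have "x k powr p \<le> Max (x ` A) powr p"
      using assms(2,4) k by (simp add: powr_mono2)
    then show ?thesis
      using assms(3) k by (simp add: mult_left_mono)
  qed
  then have "(\<Sum>k\<in>A. c k * x k powr p) \<le> (\<Sum>k\<in>A. c k * Max (x ` A) powr p)"
    by (rule sum_mono)
  then show ?thesis by (simp add: sum_distrib_right)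
qed

lemma weighted_powr_sum_ge:
  fixes x c :: "'a \<Rightarrow> real"
  assumes "finite A" "A \<noteq> {}" "\<And>k. k \<in> A \<Longrightarrow> c k \<ge> 0" "\<And>k. k \<in> A \<Longrightarrow> x k \<ge> 0"
  shows "Min (c ` A) * Max (x ` A) powr p \<le> (\<Sum>k\<in>A. c k * x k powr p)"
proof -
  have "Max (x ` A) \<in> x ` A"
    using assms(1,2) by (intro Max_in) auto
  then obtain m where m: "m \<in> A" "x m = Max (x ` A)"
    by (metis imageE)
  have "Min (c ` A) \<le> c m"
    using assms(1) m(1) by simp
  then have "Min (c ` A) * Max (x ` A) powr p \<le> c m * x m powr p"
    unfolding m(2) by (rule mult_right_mono) simp
  also have "\<dots> \<le> (\<Sum>k\<in>A. c k * x k powr p)"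
    using assms m by (intro member_le_sum) auto
  finally show ?thesis .
qed

lemma weighted_power_mean_tendsto_Max:
  fixes f :: "'a \<Rightarrow> real \<Rightarrow> real" and c :: "'a \<Rightarrow> real"
  assumes A: "finite A" "A \<noteq> {}"
    and c_pos: "\<And>k. k \<in> A \<Longrightarrow> c k > 0"
    and f_nonneg: "\<And>k p. k \<in> A \<Longrightarrow> f k p \<ge> 0"
    and f_lim: "\<And>k. k \<in> A \<Longrightarrow> (f k \<longlongrightarrow> a k) at_top"
  shows "((\<lambda>p. (\<Sum>k\<in>A. c k * f k p powr p) powr (1 / p)) \<longlongrightarrow> Max (a ` A)) at_top"
proof -
  define M where "M p = Max ((\<lambda>k. f k p) ` A)" for p
  define S where "S p = (\<Sum>k\<in>A. c k * f k p powr p)" for p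
  have M_nonneg: "M p \<ge> 0" for p
    using A f_nonneg unfolding M_def by (auto simp: Max_ge_iff)
  have c_min: "Min (c ` A) > 0" and c_sum: "(\<Sum>k\<in>A. c k) > 0"
    using A c_pos by (auto intro: sum_pos)
  have root: "(K * M p powr p) powr (1 / p) = K powr (1 / p) * M p" if "p > 0" "K \<ge> 0" for p K
    using that M_nonneg[of p] by (simp add: powr_mult powr_powr)
  have lower: "\<forall>\<^sub>F p in at_top. Min (c ` A) powr (1 / p) * M p \<le> S p powr (1 / p)"
    using eventually_gt_at_top[of "0::real"]
  proof eventually_elim
    case (elim p)
    have "Min (c ` A) * M p powr p \<le> S p"
      unfolding M_def S_def using A c_pos f_nonneg
      by (intro weighted_powr_sum_ge) (auto simp: less_imp_le)
    then have "(Min (c ` A) * M p powr p) powr (1 / p) \<le> S p powr (1 / p)"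
      using elim c_min by (intro powr_mono2) auto
    then show ?case
      using elim c_min root[of p "Min (c ` A)"] by simp
  qed
  have upper: "\<forall>\<^sub>F p in at_top. S p powr (1 / p) \<le> (\<Sum>k\<in>A. c k) powr (1 / p) * M p"
    using eventually_gt_at_top[of "0::real"]
  proof eventually_elim
    case (elim p)
    have "S p \<le> (\<Sum>k\<in>A. c k) * M p powr p"
      unfolding M_def S_def using A elim c_pos f_nonneg
      by (intro weighted_powr_sum_le) (auto simp: less_imp_le)
    moreover have "S p \<ge> 0"
      unfolding S_def using c_pos f_nonneg by (auto intro!: sum_nonneg simp: less_imp_le)
    ultimately have "S p powr (1 / p) \<le> ((\<Sum>k\<in>A. c k) * M p powr p) powr (1 / p)"
      using elim by (intro powr_mono2) auto
    then show ?case
      using elim c_sum root[of p "\<Sum>k\<in>A. c k"] by simp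
  qed
  have root_lim: "((\<lambda>p. K powr (1 / p)) \<longlongrightarrow> 1) at_top" if "K > 0" for K :: real
    using tendsto_powr[OF tendsto_const tendsto_inverse_0_at_top[OF filterlim_ident], of K] that
    by (simp add: inverse_eq_divide)
  have M_lim: "(M \<longlongrightarrow> Max (a ` A)) at_top"
    unfolding M_def using A f_lim by (rule tendsto_Max_finite)
  have lower_lim: "((\<lambda>p. Min (c ` A) powr (1 / p) * M p) \<longlongrightarrow> Max (a ` A)) at_top"
    using tendsto_mult[OF root_lim[OF c_min] M_lim] by simp
  have upper_lim: "((\<lambda>p. (\<Sum>k\<in>A. c k) powr (1 / p) * M p) \<longlongrightarrow> Max (a ` A)) at_top"
    using tendsto_mult[OF root_lim[OF c_sum] M_lim] by simp
  show ?thesis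
    using tendsto_sandwich[OF lower upper lower_lim upper_lim] unfolding S_def .
qed

definition G_weight :: "real \<Rightarrow> ('n::finite \<times> 'n) + 'n \<Rightarrow> real" where
  "G_weight eps k =
     (case k of Inl _ \<Rightarrow> 1 / (eps * real CARD('n) ^ 2) | Inr _ \<Rightarrow> 1 / real CARD('n))"

definition G_term ::
    "real \<Rightarrow> ('n::finite \<Rightarrow> 'n \<Rightarrow> real) \<Rightarrow> (real \<Rightarrow> real) \<Rightarrow> ('n \<Rightarrow> real) \<Rightarrow> ('n \<times> 'n) + 'n \<Rightarrow> real"
  where
  "G_term eps W V u k = (case k of Inl (i, j) \<Rightarrow> W i j * \<bar>u i - u j\<bar> | Inr i \<Rightarrow> V (u i) / eps)"

lemma G_weight_pos: "eps > 0 \<Longrightarrow> G_weight eps k > 0"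
  by (simp add: G_weight_def split: sum.split)

lemma G_term_nonneg:
  assumes "eps > 0" "\<And>x. V x \<ge> 0" "\<And>i j. W i j \<ge> 0"
  shows "G_term eps W V u k \<ge> 0"
  using assms by (simp add: G_term_def split: sum.split prod.split)

lemma tendsto_G_term:
  assumes "continuous_on UNIV V" "\<And>i. ((\<lambda>p. up p i) \<longlongrightarrow> u i) F"
  shows "((\<lambda>p. G_term eps W V (up p) k) \<longlongrightarrow> G_term eps W V u k) F"
proof -
  have "((\<lambda>p. V (up p i)) \<longlongrightarrow> V (u i)) F" for i
    using assms by (intro continuous_on_tendsto_compose[of UNIV V]) auto
  with assms(2) show ?thesis
    by (auto simp: G_term_def divide_inverse split: sum.split prod.split intro!: tendsto_intros)
qed

lemma Gp_eq_weighted_power_mean: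
  fixes u :: "'n::finite \<Rightarrow> real"
  assumes "eps > 0" "\<And>x. V x \<ge> 0" "\<And>i j. W i j \<ge> 0"
  shows "Gp eps W V p u = (\<Sum>k\<in>UNIV. G_weight eps k * G_term eps W V u k powr p) powr (1 / p)"
proof -
  have "(\<Sum>k\<in>UNIV. G_weight eps k * G_term eps W V u k powr p)
      = (\<Sum>ij\<in>UNIV. G_weight eps (Inl ij) * G_term eps W V u (Inl ij) powr p)
        + (\<Sum>i\<in>UNIV. G_weight eps (Inr i) * G_term eps W V u (Inr i) powr p)"
    by (simp add: sum.Plus flip: UNIV_Plus_UNIV del: UNIV_Plus_UNIV)
  also have "\<dots> = 1 / (eps * real CARD('n) ^ 2)
        * (\<Sum>i\<in>UNIV. \<Sum>j\<in>UNIV. W i j powr p * \<bar>u i - u j\<bar> powr p)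
      + 1 / (eps powr p * real CARD('n)) * (\<Sum>i\<in>UNIV. V (u i) powr p)"
    using assms
    by (simp add: G_weight_def G_term_def powr_mult powr_divide sum_distrib_left
        sum_divide_distrib sum.cartesian_product UNIV_Times_UNIV[symmetric] case_prod_beta
        mult.commute del: UNIV_Times_UNIV)
  finally show ?thesis
    unfolding Gp_def by simp
qed

lemma Ginf_eq_Max_G_term:
  assumes "eps > 0"
  shows "Ginf eps W V u = Max (range (G_term eps W V u))"
proof -
  have pairs: "{W i j * \<bar>u i - u j\<bar> | i j. True} = (\<lambda>(i, j). W i j * \<bar>u i - u j\<bar>) ` UNIV"
    by auto
  have points: "{V (u i) | i. True} = (\<lambda>i. V (u i)) ` UNIV"
    by auto
  have range_eq: "range (G_term eps W V u)
      = (\<lambda>(i, j). W i j * \<bar>u i - u j\<bar>) ` UNIV \<union> (\<lambda>x. x / eps) ` (\<lambda>i. V (u i)) ` UNIV"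
    by (subst UNIV_sum) (simp add: image_Un image_image G_term_def)
  have "mono (\<lambda>x::real. x / eps)"
    using assms by (intro monoI) (simp add: divide_right_mono)
  then have scaled: "Max ((\<lambda>x. x / eps) ` (\<lambda>i. V (u i)) ` UNIV)
      = (1 / eps) * Max ((\<lambda>i. V (u i)) ` UNIV)"
    by (subst mono_Max_commute[symmetric]) auto
  have "Max (range (G_term eps W V u))
      = max (Max ((\<lambda>(i, j). W i j * \<bar>u i - u j\<bar>) ` UNIV))
            (Max ((\<lambda>x. x / eps) ` (\<lambda>i. V (u i)) ` UNIV))"
    unfolding range_eq by (rule Max.union) auto
  then show ?thesis
    unfolding Ginf_def pairs points scaled by simp
qed

lemma Gp_tendsto_Ginf:
  fixes up :: "real \<Rightarrow> 'n::finite \<Rightarrow> real"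
  assumes "eps > 0" "continuous_on UNIV V" "\<And>x. V x \<ge> 0" "\<And>i j. W i j \<ge> 0"
    and "\<And>i. ((\<lambda>p. up p i) \<longlongrightarrow> u i) at_top"
  shows "((\<lambda>p. Gp eps W V p (up p)) \<longlongrightarrow> Ginf eps W V u) at_top"
proof -
  have "((\<lambda>p. (\<Sum>k\<in>UNIV. G_weight eps k * G_term eps W V (up p) k powr p) powr (1 / p))
      \<longlongrightarrow> Max (range (G_term eps W V u))) at_top"
    using assms by (intro weighted_power_mean_tendsto_Max G_weight_pos G_term_nonneg tendsto_G_term) auto
  then show ?thesis
    using assms(1,3,4) by (simp add: Gp_eq_weighted_power_mean Ginf_eq_Max_G_term)
qed

theorem proposition1p4:
  fixes eps :: real and W :: "'n::finite \<Rightarrow> 'n \<Rightarrow> real" and V :: "real \<Rightarrow> real"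
  assumes "eps > 0"
    and "continuous_on UNIV V"
    and "\<And>x. V x \<ge> 0"
    and "\<And>i j. W i j \<ge> 0"
  shows "(\<forall>(u :: 'n \<Rightarrow> real) (up :: real \<Rightarrow> 'n \<Rightarrow> real).
            (\<forall>i. ((\<lambda>p. up p i) \<longlongrightarrow> u i) at_top) \<longrightarrow>
            ereal (Ginf eps W V u) \<le> Liminf at_top (\<lambda>p. ereal (Gp eps W V p (up p))))
       \<and> (\<forall>u :: 'n \<Rightarrow> real. \<exists>up :: real \<Rightarrow> 'n \<Rightarrow> real.
            (\<forall>i. ((\<lambda>p. up p i) \<longlongrightarrow> u i) at_top) \<and>
            Limsup at_top (\<lambda>p. ereal (Gp eps W V p (up p))) \<le> ereal (Ginf eps W V u))"
proof -
  have ereal_lim: "((\<lambda>p. ereal (Gp eps W V p (up p))) \<longlongrightarrow> ereal (Ginf eps W V u)) at_top"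
    if "\<forall>i. ((\<lambda>p. up p i) \<longlongrightarrow> u i) at_top" for u and up :: "real \<Rightarrow> 'n \<Rightarrow> real"
    using assms that by (intro tendsto_ereal Gp_tendsto_Ginf) auto
  show ?thesis
  proof (intro conjI allI impI)
    fix u :: "'n \<Rightarrow> real" and up :: "real \<Rightarrow> 'n \<Rightarrow> real"
    assume "\<forall>i. ((\<lambda>p. up p i) \<longlongrightarrow> u i) at_top"
    then have "Liminf at_top (\<lambda>p. ereal (Gp eps W V p (up p))) = ereal (Ginf eps W V u)"
      by (intro lim_imp_Liminf ereal_lim) simp_all
    then show "ereal (Ginf eps W V u) \<le> Liminf at_top (\<lambda>p. ereal (Gp eps W V p (up p)))"
      by simp
  next
    fix u :: "'n \<Rightarrow> real"
    have "Limsup at_top (\<lambda>p. ereal (Gp eps W V p u)) = ereal (Ginf eps W V u)"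
      by (intro lim_imp_Limsup ereal_lim) simp_all
    then show "\<exists>up. (\<forall>i. ((\<lambda>p. up p i) \<longlongrightarrow> u i) at_top) \<and>
        Limsup at_top (\<lambda>p. ereal (Gp eps W V p (up p))) \<le> ereal (Ginf eps W V u)"
      by (intro exI[of _ "\<lambda>p. u"]) simp
  qed
qed

end
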